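(* In the setting below, fix an assignment matrix $A$ for which event $\mathcal A$ holds. Then $$\mu^*(P^* )\ \ge\ \frac{\gamma}{3e^{2\kappa}} .$$
   Context: Setting. Let $n\ge1$ (number of users) and $m\ge2$ (number of items). Fix user parameters $\theta^*_1,\dots,\theta^*_n\in\mathbb R$ and item parameters $\beta^*_1,\dots,\beta^*_m\in\mathbb R$. Write $w^*_i=e^{\beta^*_i}$, $\kappa=\max_i\beta^*_i-\min_i\beta^*_i$, and $\pi^*_i=w^*_i/\sum_{k=1}^m w^*_k$. The responses $X_{li}\in\{0,1\}$ are independent with $\Pr(X_{li}=1)=e^{\theta^*_l}/(e^{\theta^*_l}+e^{\beta^*_i})$. Let $\gamma=\min_{l\in[n],\,i\ne j\in[m]}\mathbb E[X_{li}(1-X_{lj})]$. For an assignment matrix $A\in\{0,1\}^{n\times m}$ and $p\in(0,1]$, let $B=A^\top A$, $d=\frac32mnp^2$, and define $P^*_{ij}=\frac1d\sum_{l=1}^nA_{li}A_{lj}\mathbb E[X_{li}(1-X_{lj})]$ for $i\ne j$, $P^*_{ii}=1-\sum_{k\ne i}P^*_{ik}$; $P^*$ is reversible with respect to $\pi^*$. Event $\mathcal A$: $\frac12np^2\le B_{ij}\le\frac32np^2$ for all $i\ne j$. For a stochastic matrix $M$ reversible with respect to a positive probability vector (so its eigenvalues are real, $1=\lambda_1\ge\lambda_2\ge\dots\ge\lambda_m$), the spectral gap is $\mu^*(M)=1-\max\{|\lambda_2|,|\lambda_m|\}$. *)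

theory Defs
  imports "Jordan_Normal_Form.Char_Poly" "HOL-Computational_Algebra.Polynomial"
begin

(* Pr(X_{li} = 1) = e^theta_l / (e^theta_l + e^beta_i) *)
definition resp_prob :: "real \<Rightarrow> real \<Rightarrow> real" where
  "resp_prob th be = exp th / (exp th + exp be)"

(* E[X_{li}(1 - X_{lj})] for i \<noteq> j; by independence of X_{li} and X_{lj} *)
definition EX1mX :: "(nat \<Rightarrow> real) \<Rightarrow> (nat \<Rightarrow> real) \<Rightarrow> nat \<Rightarrow> nat \<Rightarrow> nat \<Rightarrow> real" where
  "EX1mX \<theta> \<beta> l i j = resp_prob (\<theta> l) (\<beta> i) * (1 - resp_prob (\<theta> l) (\<beta> j))"

definition gamma_min :: "nat \<Rightarrow> nat \<Rightarrow> (nat \<Rightarrow> real) \<Rightarrow> (nat \<Rightarrow> real) \<Rightarrow> real" where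
  "gamma_min n m \<theta> \<beta> = Min {EX1mX \<theta> \<beta> l i j | l i j. l < n \<and> i < m \<and> j < m \<and> i \<noteq> j}"

definition kappa :: "nat \<Rightarrow> (nat \<Rightarrow> real) \<Rightarrow> real" where
  "kappa m \<beta> = Max (\<beta> ` {..<m}) - Min (\<beta> ` {..<m})"

(* B = A^T A, A given as an n x m 0/1 matrix (users l < n, items i < m) *)
definition Bmat :: "nat \<Rightarrow> (nat \<Rightarrow> nat \<Rightarrow> real) \<Rightarrow> nat \<Rightarrow> nat \<Rightarrow> real" where
  "Bmat n A i j = (\<Sum>l<n. A l i * A l j)"

definition dconst :: "nat \<Rightarrow> nat \<Rightarrow> real \<Rightarrow> real" where
  "dconst n m p = 3/2 * real m * real n * p^2"

definition Poff :: "nat \<Rightarrow> nat \<Rightarrow> real \<Rightarrow> (nat \<Rightarrow> nat \<Rightarrow> real) \<Rightarrow> (nat \<Rightarrow> real) \<Rightarrow> (nat \<Rightarrow> real)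
    \<Rightarrow> nat \<Rightarrow> nat \<Rightarrow> real" where
  "Poff n m p A \<theta> \<beta> i j = (1 / dconst n m p) * (\<Sum>l<n. A l i * A l j * EX1mX \<theta> \<beta> l i j)"

definition Pstar :: "nat \<Rightarrow> nat \<Rightarrow> real \<Rightarrow> (nat \<Rightarrow> nat \<Rightarrow> real) \<Rightarrow> (nat \<Rightarrow> real) \<Rightarrow> (nat \<Rightarrow> real)
    \<Rightarrow> real mat" where
  "Pstar n m p A \<theta> \<beta> = mat m m (\<lambda>(i, j).
      if i = j then 1 - (\<Sum>k\<in>{..<m} - {i}. Poff n m p A \<theta> \<beta> i k)
      else Poff n m p A \<theta> \<beta> i j)"

definition event_A :: "nat \<Rightarrow> nat \<Rightarrow> real \<Rightarrow> (nat \<Rightarrow> nat \<Rightarrow> real) \<Rightarrow> bool" where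
  "event_A n m p A \<longleftrightarrow> (\<forall>i<m. \<forall>j<m. i \<noteq> j \<longrightarrow>
      1/2 * real n * p^2 \<le> Bmat n A i j \<and> Bmat n A i j \<le> 3/2 * real n * p^2)"

(* Eigenvalues of a real square matrix whose characteristic polynomial splits over the reals
   (e.g. a matrix reversible w.r.t. a positive probability vector), listed with algebraic
   multiplicity in non-increasing order: lambda_1 >= lambda_2 >= ... >= lambda_m. *)
definition eigs_desc :: "real mat \<Rightarrow> real list" where
  "eigs_desc M = (THE ls. sorted_wrt (\<ge>) ls \<and> char_poly M = (\<Prod>x\<leftarrow>ls. [:- x, 1:]))"

definition spectral_gap :: "real mat \<Rightarrow> real" where
  "spectral_gap M = 1 - max \<bar>eigs_desc M ! 1\<bar> \<bar>last (eigs_desc M)\<bar>"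

end

theory Submission
  imports Defs
begin

text \<open>The off-diagonal entries of \<open>P\<^sup>*\<close> lie between \<open>\<gamma>/(3m)\<close> and \<open>(1-\<gamma>)/m\<close>, so its diagonal is at
  least \<open>\<gamma>\<close>, and by Gershgorin's theorem every eigenvalue is at least \<open>2\<gamma> - 1\<close>. Subtracting
  \<open>\<gamma>/(3m)\<close> from every entry turns the eigenvalue \<open>1\<close> of the stochastic matrix \<open>P\<^sup>*\<close> into \<open>1 - \<gamma>/3\<close>
  and leaves the rest of the characteristic polynomial unchanged, while the new matrix still has
  nonnegative off-diagonal entries and row sums \<open>1 - \<gamma>/3\<close>; Gershgorin then bounds all its
  eigenvalues by \<open>1 - \<gamma>/3\<close>. Hence \<open>\<lambda>\<^sub>2 \<le> 1 - \<gamma>/3\<close> (with multiplicity) and \<open>\<mu>\<^sup>*(P\<^sup>*) \<ge> \<gamma>/3\<close>, which is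
  stronger than the claim because \<open>\<kappa> \<ge> 0\<close>. Reversibility is only needed to make the spectrum real.\<close>

lemma det_multcol:
  assumes "A \<in> carrier_mat n n" and "k < n"
  shows "det (multcol k a A) = a * det (A :: 'a :: comm_ring_1 mat)"
  using assms by (simp add: multcol_mat det_mult det_multrow_mat)

lemma det_add_const_mat:
  fixes N :: "'a :: comm_ring_1 mat"
  assumes N: "N \<in> carrier_mat n n" and n: "n > 0"
    and row_sums: "\<And>i. i < n \<Longrightarrow> (\<Sum>k<n. N $$ (i,k)) = s"
  shows "det (mat n n (\<lambda>(i,j). N $$ (i,j) + b)) * s = det N * (s + of_nat n * b)"
proof -
  define N' where "N' = mat n n (\<lambda>(i,j). N $$ (i,j) + b)"
  define E where "E = mat n n (\<lambda>(i,j). if i = j \<or> j = 0 then 1 else 0 :: 'a)"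
  define G where "G = mat n n (\<lambda>(i,j). if j = 0 then 1 else N $$ (i,j))"
  define K where "K = mat n n (\<lambda>(i,j). if i = j then 1 else if i = 0 then b else 0)"
  have carrier: "N' \<in> carrier_mat n n" "E \<in> carrier_mat n n"
    "G \<in> carrier_mat n n" "K \<in> carrier_mat n n"
    by (simp_all add: N'_def E_def G_def K_def)
  have sum_cols: "(X * E) $$ (i,j) = (if j = 0 then (\<Sum>k<n. X $$ (i,k)) else X $$ (i,j))"
    if "X \<in> carrier_mat n n" "i < n" "j < n" for X i j
  proof -
    have "(X * E) $$ (i,j) = (\<Sum>k<n. X $$ (i,k) * E $$ (k,j))"
      using that carrier by (simp add: scalar_prod_def atLeast0LessThan)
    also have "\<dots> = (\<Sum>k<n. if j = 0 then X $$ (i,k) else if k = j then X $$ (i,k) else 0)"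
      using that by (intro sum.cong) (auto simp: E_def)
    finally show ?thesis using that by auto
  qed
  have GK: "(G * K) $$ (i,j) = (if j = 0 then 1 else N $$ (i,j) + b)" if "i < n" "j < n" for i j
  proof -
    have "(G * K) $$ (i,j) = (\<Sum>k<n. (if k = j then G $$ (i,k) else 0)
                                  + (if k = 0 \<and> j \<noteq> 0 then b * G $$ (i,k) else 0))"
      using that carrier by (auto simp: scalar_prod_def atLeast0LessThan K_def intro!: sum.cong)
    also have "\<dots> = (if j = 0 then 1 else N $$ (i,j) + b)"
      using that n by (simp add: sum.distrib G_def)
    finally show ?thesis .
  qed
  have det_E: "det E = 1"
    by (subst det_lower_triangular[OF _ carrier(2)]) (auto simp: E_def prod_list_diag_prod)
  have "N * E = multcol 0 s G"
  proof (rule eq_matI)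
    fix i j assume "i < dim_row (multcol 0 s G)" "j < dim_col (multcol 0 s G)"
    then show "(N * E) $$ (i,j) = multcol 0 s G $$ (i,j)"
      using carrier by (subst sum_cols[OF N]) (auto simp: row_sums G_def)
  qed (use N carrier in auto)
  hence det_N: "det N = s * det G"
    using det_mult[OF N carrier(2)] det_multcol[OF carrier(3) n] det_E by simp
  have "N' * E = multcol 0 (s + of_nat n * b) (G * K)"
  proof (rule eq_matI)
    fix i j assume "i < dim_row (multcol 0 (s + of_nat n * b) (G * K))"
      "j < dim_col (multcol 0 (s + of_nat n * b) (G * K))"
    then show "(N' * E) $$ (i,j) = multcol 0 (s + of_nat n * b) (G * K) $$ (i,j)"
      using carrier by (subst sum_cols[OF carrier(1)])
        (auto simp: GK N'_def sum.distrib row_sums simp del: index_mult_mat(1))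
  qed (use carrier in auto)
  hence "det N' = (s + of_nat n * b) * (det G * det K)"
    using det_mult[OF carrier(1,2)] det_mult[OF carrier(3,4)] det_multcol[of "G * K" n 0]
      carrier n det_E
    by simp
  moreover have "det K = 1"
    by (subst det_upper_triangular[OF _ carrier(4)])
       (auto simp: K_def upper_triangular_def prod_list_diag_prod)
  ultimately show ?thesis using det_N unfolding N'_def[symmetric] by (simp add: ac_simps)
qed

lemma poly_char_poly_eq_det:
  fixes A :: "'a :: field mat"
  assumes A: "A \<in> carrier_mat n n"
  shows "poly (char_poly A) t = det (mat n n (\<lambda>(i,j). (if i = j then t else 0) - A $$ (i,j)))"
proof -
  have "- char_matrix A t = mat n n (\<lambda>(i,j). (if i = j then t else 0) - A $$ (i,j))"
    by (rule eq_matI) (use A in \<open>auto simp: char_matrix_def\<close>)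
  thus ?thesis using char_poly_matrix[OF A] by simp
qed

lemma char_poly_sub_const_mat:
  fixes A :: "'a :: field_char_0 mat"
  assumes A: "A \<in> carrier_mat m m" and m: "m > 0"
    and row_sums: "\<And>i. i < m \<Longrightarrow> (\<Sum>k<m. A $$ (i,k)) = 1"
  shows "char_poly (mat m m (\<lambda>(i,j). A $$ (i,j) - c / of_nat m)) * [:-1, 1:]
       = char_poly A * [:-(1 - c), 1:]"
proof (rule poly_eq_poly_eq_iff[THEN iffD1, OF ext])
  fix t
  let ?M = "mat m m (\<lambda>(i,j). A $$ (i,j) - c / of_nat m)"
  define N where "N = mat m m (\<lambda>(i,j). (if i = j then t else 0) - A $$ (i,j))"
  have N: "N \<in> carrier_mat m m" by (simp add: N_def)
  have row_sums_N: "(\<Sum>k<m. N $$ (i,k)) = t - 1" if "i < m" for i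
    using that row_sums[OF that] by (simp add: N_def sum_subtractf)
  have "mat m m (\<lambda>(i,j). (if i = j then t else 0) - ?M $$ (i,j))
      = mat m m (\<lambda>(i,j). N $$ (i,j) + c / of_nat m)"
    by (rule eq_matI) (auto simp: N_def)
  hence "poly (char_poly ?M) t * (t - 1) = det N * (t - 1 + of_nat m * (c / of_nat m))"
    using det_add_const_mat[OF N m row_sums_N] poly_char_poly_eq_det[of ?M m t] by simp
  moreover have "det N = poly (char_poly A) t"
    unfolding N_def poly_char_poly_eq_det[OF A] ..
  ultimately show "poly (char_poly ?M * [:-1, 1:]) t = poly (char_poly A * [:-(1 - c), 1:]) t"
    using m by (simp add: algebra_simps)
qed

lemma eigenvalue_in_gershgorin_disc:
  fixes M :: "real mat"
  assumes M: "M \<in> carrier_mat m m" and ev: "eigenvalue M x"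
  shows "\<exists>i<m. \<bar>x - M $$ (i,i)\<bar> \<le> (\<Sum>k\<in>{..<m} - {i}. \<bar>M $$ (i,k)\<bar>)"
proof -
  obtain v where v: "v \<in> carrier_vec m" "v \<noteq> 0\<^sub>v m" "M *\<^sub>v v = x \<cdot>\<^sub>v v"
    using ev M unfolding eigenvalue_def eigenvector_def by auto
  have "\<exists>k<m. v $ k \<noteq> 0"
    using v(1,2) by (metis carrier_vecD eq_vecI index_zero_vec(1,2))
  hence "m > 0" by auto
  let ?S = "(\<lambda>k. \<bar>v $ k\<bar>) ` {..<m}"
  obtain i where i: "i < m" and i_Max: "\<bar>v $ i\<bar> = Max ?S"
    using Max_in[of ?S] \<open>m > 0\<close> by fastforce
  have i_max: "\<bar>v $ k\<bar> \<le> \<bar>v $ i\<bar>" if "k < m" for k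
    unfolding i_Max using that by (intro Max_ge) auto
  have vi: "\<bar>v $ i\<bar> > 0"
  proof -
    obtain k where "k < m" "v $ k \<noteq> 0" using \<open>\<exists>k<m. v $ k \<noteq> 0\<close> by blast
    thus ?thesis using i_max[of k] zero_less_abs_iff[of "v $ k"] by linarith
  qed
  have "x * v $ i = (\<Sum>k<m. M $$ (i,k) * v $ k)"
    using arg_cong[OF v(3), of "\<lambda>u. u $ i"] M v(1) i
    by (simp add: scalar_prod_def atLeast0LessThan)
  also have "\<dots> = M $$ (i,i) * v $ i + (\<Sum>k\<in>{..<m} - {i}. M $$ (i,k) * v $ k)"
    using i by (subst sum.remove[of _ i]) auto
  finally have "(x - M $$ (i,i)) * v $ i = (\<Sum>k\<in>{..<m} - {i}. M $$ (i,k) * v $ k)"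
    by (simp add: algebra_simps)
  hence "\<bar>x - M $$ (i,i)\<bar> * \<bar>v $ i\<bar> = \<bar>\<Sum>k\<in>{..<m} - {i}. M $$ (i,k) * v $ k\<bar>"
    by (metis abs_mult)
  also have "\<dots> \<le> (\<Sum>k\<in>{..<m} - {i}. \<bar>M $$ (i,k)\<bar> * \<bar>v $ i\<bar>)"
    by (rule order_trans[OF sum_abs]) (auto simp: abs_mult intro!: sum_mono mult_left_mono i_max)
  also have "\<dots> = (\<Sum>k\<in>{..<m} - {i}. \<bar>M $$ (i,k)\<bar>) * \<bar>v $ i\<bar>"
    by (simp add: sum_distrib_right)
  finally show ?thesis
    using vi i by auto
qed

lemma eigenvalue_bounds_nonneg_off_diag:
  fixes M :: "real mat"
  assumes M: "M \<in> carrier_mat m m" and ev: "eigenvalue M x"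
    and off_diag: "\<And>i j. i < m \<Longrightarrow> j < m \<Longrightarrow> i \<noteq> j \<Longrightarrow> M $$ (i,j) \<ge> 0"
    and row_sums: "\<And>i. i < m \<Longrightarrow> (\<Sum>k<m. M $$ (i,k)) = r"
  shows "\<exists>i<m. 2 * M $$ (i,i) - r \<le> x \<and> x \<le> r"
proof -
  obtain i where i: "i < m" and disc: "\<bar>x - M $$ (i,i)\<bar> \<le> (\<Sum>k\<in>{..<m} - {i}. \<bar>M $$ (i,k)\<bar>)"
    using eigenvalue_in_gershgorin_disc[OF M ev] by blast
  have "(\<Sum>k\<in>{..<m} - {i}. \<bar>M $$ (i,k)\<bar>) = (\<Sum>k\<in>{..<m} - {i}. M $$ (i,k))"
    by (intro sum.cong refl) (use off_diag i in auto)
  also have "\<dots> = r - M $$ (i,i)"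
    using row_sums[OF i] sum.remove[of "{..<m}" i "\<lambda>k. M $$ (i,k)"] i by simp
  finally have "(\<Sum>k\<in>{..<m} - {i}. \<bar>M $$ (i,k)\<bar>) = r - M $$ (i,i)" .
  thus ?thesis using i disc by (intro exI[of _ i]) auto
qed

lemma root_char_poly_imp_eigenvalue:
  assumes "A \<in> carrier_mat n n" and "char_poly A = (\<Prod>x\<leftarrow>ls. [:-x, 1:])" and "x \<in> set ls"
  shows "eigenvalue (A :: 'a :: field mat) x"
  using assms by (simp add: eigenvalue_root_char_poly poly_prod_list prod_list_zero_iff)

definition reversible_wrt :: "real mat \<Rightarrow> (nat \<Rightarrow> real) \<Rightarrow> bool" where
  "reversible_wrt P w \<longleftrightarrow> (\<forall>i<dim_row P. w i > 0) \<and>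
     (\<forall>i<dim_row P. \<forall>j<dim_row P. w i * P $$ (i,j) = w j * P $$ (j,i))"

text \<open>The Hermitian form \<open>\<Sum>\<^sub>i\<^sub>j w\<^sub>i P\<^sub>i\<^sub>j conj(v\<^sub>i) v\<^sub>j\<close> is real and equals \<open>a \<Sum>\<^sub>i w\<^sub>i |v\<^sub>i|\<^sup>2\<close>.\<close>

lemma eigenvalue_real_if_reversible:
  fixes P :: "real mat"
  assumes P: "P \<in> carrier_mat m m" and rev: "reversible_wrt P w"
    and ev: "eigenvalue (map_mat complex_of_real P) a"
  shows "a \<in> \<real>"
proof -
  have w: "\<And>i. i < m \<Longrightarrow> w i > 0"
    and sym: "\<And>i j. i < m \<Longrightarrow> j < m \<Longrightarrow> w i * P $$ (i,j) = w j * P $$ (j,i)"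
    using rev P unfolding reversible_wrt_def by auto
  obtain v where v: "v \<in> carrier_vec m" "v \<noteq> 0\<^sub>v m" "map_mat complex_of_real P *\<^sub>v v = a \<cdot>\<^sub>v v"
    using ev P unfolding eigenvalue_def eigenvector_def by auto
  have eigen_eq: "(\<Sum>j<m. of_real (P $$ (i,j)) * v $ j) = a * v $ i" if "i < m" for i
    using arg_cong[OF v(3), of "\<lambda>u. u $ i"] P v(1) that
    by (simp add: scalar_prod_def atLeast0LessThan)
  define Q where "Q = (\<Sum>i<m. \<Sum>j<m. of_real (w i * P $$ (i,j)) * cnj (v $ i) * v $ j)"
  define W where "W = (\<Sum>i<m. w i * (cmod (v $ i))\<^sup>2)"
  have "Q = (\<Sum>i<m. of_real (w i) * cnj (v $ i) * (\<Sum>j<m. of_real (P $$ (i,j)) * v $ j))"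
    unfolding Q_def by (simp add: sum_distrib_left mult_ac)
  also have "\<dots> = (\<Sum>i<m. of_real (w i) * (cnj (v $ i) * v $ i) * a)"
    by (intro sum.cong refl) (subst eigen_eq, simp_all add: mult_ac)
  also have "\<dots> = a * of_real W"
    unfolding W_def of_real_sum sum_distrib_left
    by (intro sum.cong refl) (simp only: of_real_mult complex_norm_square mult_ac)
  finally have Q_eq: "Q = a * of_real W" .
  have "cnj Q = (\<Sum>j<m. \<Sum>i<m. of_real (w i * P $$ (i,j)) * v $ i * cnj (v $ j))"
    unfolding Q_def by (subst sum.swap) (simp add: mult_ac)
  also have "\<dots> = Q"
    unfolding Q_def by (intro sum.cong refl) (auto simp: sym mult_ac)
  finally have "cnj a * of_real W = a * of_real W" using Q_eq by simp
  moreover obtain i where i: "i < m" "v $ i \<noteq> 0"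
    using v(1,2) by (metis carrier_vecD eq_vecI index_zero_vec(1,2))
  have "W > 0"
    unfolding W_def using i w
    by (intro sum_pos2[of _ i]) (auto intro!: mult_nonneg_nonneg simp: less_imp_le)
  ultimately have "cnj a = a" by simp
  thus ?thesis using Reals_cnj_iff by blast
qed

lemma char_poly_splits_if_reversible:
  fixes P :: "real mat"
  assumes P: "P \<in> carrier_mat m m" and rev: "reversible_wrt P w"
  shows "\<exists>bs. char_poly P = (\<Prod>b\<leftarrow>bs. [:-b, 1:])"
proof -
  interpret of_real_poly: map_poly_inj_idom_hom "of_real :: real \<Rightarrow> complex" ..
  let ?PC = "map_mat complex_of_real P"
  have PC: "?PC \<in> carrier_mat m m" using P by simp
  obtain as where as: "char_poly ?PC = (\<Prod>a\<leftarrow>as. [:-a, 1:])"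
    using char_poly_factorized[OF PC] by blast
  have "a \<in> \<real>" if "a \<in> set as" for a
    by (rule eigenvalue_real_if_reversible[OF P rev root_char_poly_imp_eigenvalue[OF PC as that]])
  hence as_real: "as = map of_real (map Re as)"
    by (induct as) (auto simp: Reals_def)
  have "map_poly of_real (char_poly P) = char_poly ?PC"
    by (rule of_real_hom.char_poly_hom[OF P, symmetric])
  also have "\<dots> = map_poly of_real (\<Prod>b\<leftarrow>map Re as. [:-b, 1:])"
    by (subst as, subst as_real) (simp add: of_real_poly.hom_prod_list o_def)
  finally show ?thesis by (blast dest: of_real_poly.injectivity)
qed

lemma prod_list_map_eq_if_mset_eq:
  assumes "mset xs = mset ys"
  shows "prod_list (map f xs) = (prod_list (map f ys) :: 'b :: comm_monoid_mult)"
  by (metis assms mset_map prod_mset_prod_list)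

lemma mset_eq_if_linear_factors_eq:
  fixes xs ys :: "'a :: idom list"
  assumes "(\<Prod>x\<leftarrow>xs. [:-x, 1:]) = (\<Prod>y\<leftarrow>ys. [:-y, 1:])"
  shows "mset xs = mset ys"
  using assms
proof (induct xs arbitrary: ys)
  case Nil
  show ?case
  proof (cases ys)
    case (Cons y ys')
    have "poly (\<Prod>y\<leftarrow>ys. [:-y, 1:]) y = 0" using Cons by simp
    thus ?thesis using Nil by simp
  qed simp
next
  case (Cons x xs)
  have "poly (\<Prod>y\<leftarrow>ys. [:-y, 1:]) x = 0" using Cons(2)[symmetric] by simp
  hence x: "x \<in> set ys" by (auto simp: poly_prod_list prod_list_zero_iff)
  hence "(\<Prod>y\<leftarrow>ys. [:-y, 1:]) = (\<Prod>y\<leftarrow>x # remove1 x ys. [:-y, 1:])"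
    by (intro prod_list_map_eq_if_mset_eq) simp
  also have "\<dots> = [:-x, 1:] * (\<Prod>y\<leftarrow>remove1 x ys. [:-y, 1:])"
    by (simp only: list.map prod_list.Cons)
  finally have "(\<Prod>y\<leftarrow>ys. [:-y, 1:]) = [:-x, 1:] * (\<Prod>y\<leftarrow>remove1 x ys. [:-y, 1:])" .
  hence "[:-x, 1:] * (\<Prod>y\<leftarrow>xs. [:-y, 1:]) = [:-x, 1:] * (\<Prod>y\<leftarrow>remove1 x ys. [:-y, 1:])"
    using Cons(2) by (simp only: list.map prod_list.Cons)
  hence "(\<Prod>y\<leftarrow>xs. [:-y, 1:]) = (\<Prod>y\<leftarrow>remove1 x ys. [:-y, 1:])"
    by (subst (asm) mult_left_cancel) auto
  from Cons(1)[OF this] x show ?case by simp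
qed

lemma eigs_desc_eq:
  assumes "char_poly P = (\<Prod>b\<leftarrow>bs. [:-b, 1:])"
  shows "eigs_desc P = rev (sort bs)"
  unfolding eigs_desc_def
proof (rule the_equality)
  show "sorted_wrt (\<ge>) (rev (sort bs)) \<and> char_poly P = (\<Prod>x\<leftarrow>rev (sort bs). [:-x, 1:])"
    unfolding assms by (simp add: sorted_wrt_rev prod_list_map_eq_if_mset_eq[of "rev (sort bs)" bs])
next
  fix ls
  assume ls: "sorted_wrt (\<ge>) ls \<and> char_poly P = (\<Prod>x\<leftarrow>ls. [:-x, 1:])"
  hence "mset ls = mset bs" using assms by (intro mset_eq_if_linear_factors_eq) simp
  moreover have "sorted (rev ls)" using ls by (simp add: sorted_wrt_rev)
  ultimately have "sort bs = rev ls" by (intro properties_for_sort) auto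
  thus "ls = rev (sort bs)" by simp
qed

text \<open>A double eigenvalue \<open>1\<close> of \<open>P\<close> would survive as an eigenvalue of \<open>P - (c/m) J\<close>, whose
  eigenvalues are at most \<open>1 - c\<close> by Gershgorin.\<close>

lemma second_eigenvalue_le:
  fixes P :: "real mat"
  assumes P: "P \<in> carrier_mat m m" and m: "m > 0" and c: "c > 0"
    and row_sums: "\<And>i. i < m \<Longrightarrow> (\<Sum>k<m. P $$ (i,k)) = 1"
    and off_diag: "\<And>i j. i < m \<Longrightarrow> j < m \<Longrightarrow> i \<noteq> j \<Longrightarrow> c / m \<le> P $$ (i,j)"
    and sorted: "sorted_wrt (\<ge>) ls" and ls: "char_poly P = (\<Prod>x\<leftarrow>ls. [:-x, 1:])"
    and len: "2 \<le> length ls"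
  shows "ls ! 1 \<le> 1 - c"
proof (rule ccontr)
  assume "\<not> ls ! 1 \<le> 1 - c"
  define M where "M = mat m m (\<lambda>(i,j). P $$ (i,j) - c / real m)"
  have M: "M \<in> carrier_mat m m" by (simp add: M_def)
  have M_eigenvalue_le: "y \<le> 1 - c" if "eigenvalue M y" for y
  proof -
    have "(\<Sum>k<m. M $$ (i,k)) = 1 - c" if "i < m" for i
      using that row_sums[OF that] m by (simp add: M_def sum_subtractf)
    thus ?thesis
      using eigenvalue_bounds_nonneg_off_diag[OF M \<open>eigenvalue M y\<close>] off_diag by (auto simp: M_def)
  qed
  have char_poly_M: "char_poly M * [:-1, 1:] = char_poly P * [:-(1 - c), 1:]"
    unfolding M_def using char_poly_sub_const_mat[OF P m row_sums] by simp
  have at_one: "x = 1" if "x \<in> set ls" "x > 1 - c" for x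
  proof (rule ccontr)
    assume "x \<noteq> 1"
    have "poly (char_poly P) x = 0"
      using that(1) ls by (simp add: poly_prod_list prod_list_zero_iff)
    hence "poly (char_poly M) x * (x - 1) = 0"
      using arg_cong[OF char_poly_M, of "\<lambda>q. poly q x"] by simp
    hence "eigenvalue M x"
      using \<open>x \<noteq> 1\<close> eigenvalue_root_char_poly[OF M] by simp
    thus False using M_eigenvalue_le that(2) by fastforce
  qed
  have "ls ! 0 \<in> set ls" "ls ! 1 \<in> set ls" using len by (auto intro!: nth_mem)
  moreover have "ls ! 0 \<ge> ls ! 1" using sorted len by (auto simp: sorted_wrt_iff_nth_less)
  ultimately have "ls ! 0 = 1" "ls ! 1 = 1"
    using at_one[of "ls ! 0"] at_one[of "ls ! 1"] \<open>\<not> ls ! 1 \<le> 1 - c\<close> by auto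
  moreover have "ls = ls ! 0 # ls ! 1 # drop 2 ls"
    using len by (cases ls; cases "tl ls") auto
  ultimately have ls_split: "ls = 1 # 1 # drop 2 ls" by simp
  define q R where "q = [:-1, 1 :: real:]" and "R = (\<Prod>x\<leftarrow>drop 2 ls. [:-x, 1:])"
  have "char_poly P = q * (q * R)"
    using arg_cong[OF ls_split, of "\<lambda>l. \<Prod>x\<leftarrow>l. [:-x, 1:]"] unfolding ls q_def R_def
    by (simp only: list.map prod_list.Cons)
  hence "q * char_poly M = q * (q * R * [:-(1 - c), 1:])"
    using char_poly_M unfolding q_def[symmetric] by (simp only: ac_simps)
  hence "char_poly M = q * R * [:-(1 - c), 1:]"
    by (subst (asm) mult_left_cancel) (auto simp: q_def)
  hence "poly (char_poly M) 1 = 0" by (simp add: q_def)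
  hence "eigenvalue M 1" using eigenvalue_root_char_poly[OF M] by simp
  thus False using M_eigenvalue_le c by fastforce
qed

lemma spectral_gap_ge_if_off_diag_ge:
  fixes P :: "real mat"
  assumes P: "P \<in> carrier_mat m m" and m: "2 \<le> m" and c: "c > 0"
    and rev: "reversible_wrt P w"
    and row_sums: "\<And>i. i < m \<Longrightarrow> (\<Sum>k<m. P $$ (i,k)) = 1"
    and off_diag: "\<And>i j. i < m \<Longrightarrow> j < m \<Longrightarrow> i \<noteq> j \<Longrightarrow> c / m \<le> P $$ (i,j)"
    and diag: "\<And>i. i < m \<Longrightarrow> c / 2 \<le> P $$ (i,i)"
  shows "c \<le> spectral_gap P"
proof -
  obtain bs where bs: "char_poly P = (\<Prod>b\<leftarrow>bs. [:-b, 1:])"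
    using char_poly_splits_if_reversible[OF P rev] by blast
  define ls where "ls = eigs_desc P"
  have ls: "ls = rev (sort bs)" unfolding ls_def by (rule eigs_desc_eq[OF bs])
  have char_poly_ls: "char_poly P = (\<Prod>x\<leftarrow>ls. [:-x, 1:])"
    unfolding bs ls by (intro prod_list_map_eq_if_mset_eq) simp
  have sorted: "sorted_wrt (\<ge>) ls" unfolding ls by (simp add: sorted_wrt_rev)
  have len: "length ls = m"
    using degree_linear_factors[of uminus ls] degree_monic_char_poly[OF P] char_poly_ls by simp
  have lower: "c - 1 \<le> x" if x: "x \<in> set ls" for x
  proof -
    have "\<And>i j. i < m \<Longrightarrow> j < m \<Longrightarrow> i \<noteq> j \<Longrightarrow> P $$ (i,j) \<ge> 0"
      using off_diag c by (meson divide_nonneg_nonneg less_imp_le of_nat_0_le_iff order_trans)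
    then obtain i where "i < m" "2 * P $$ (i,i) - 1 \<le> x"
      using eigenvalue_bounds_nonneg_off_diag[OF P root_char_poly_imp_eigenvalue[OF P char_poly_ls x]]
        row_sums by blast
    thus ?thesis using diag by fastforce
  qed
  have second: "ls ! 1 \<le> 1 - c"
    using second_eigenvalue_le[OF P _ c row_sums off_diag sorted char_poly_ls] m len by simp
  have "ls \<noteq> []" using len m by auto
  hence "last ls = ls ! (m - 1)" using last_conv_nth[of ls] len by simp
  hence "last ls \<le> ls ! 1"
    using sorted len m by (cases "m = 2") (auto simp: sorted_wrt_iff_nth_less)
  hence "\<bar>ls ! 1\<bar> \<le> 1 - c" "\<bar>last ls\<bar> \<le> 1 - c"
    using second lower[of "ls ! 1"] lower[of "last ls"] len m \<open>ls \<noteq> []\<close>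
    by (auto simp: nth_mem)
  thus ?thesis unfolding spectral_gap_def ls_def[symmetric] by simp
qed

lemma resp_prob_pos: "0 < resp_prob a b"
  and resp_prob_less_1: "resp_prob a b < 1"
  unfolding resp_prob_def by (auto simp: add_pos_pos)

lemma EX1mX_pos: "0 < EX1mX \<theta> \<beta> l i j"
  unfolding EX1mX_def using resp_prob_pos resp_prob_less_1 by simp

lemma EX1mX_detailed_balance:
  "exp (\<beta> i) * EX1mX \<theta> \<beta> l i j = exp (\<beta> j) * EX1mX \<theta> \<beta> l j i"
proof -
  have one_minus: "1 - resp_prob a b = exp b / (exp a + exp b)" for a b
  proof -
    have "exp a + exp b > 0" by (simp add: add_pos_pos)
    thus ?thesis unfolding resp_prob_def by (simp add: field_simps)
  qed
  have "a * (x / c * (y / e)) = (a * x * y) / (c * e)" for a x y c e :: real by simp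
  thus ?thesis unfolding EX1mX_def one_minus unfolding resp_prob_def by (simp add: mult_ac)
qed

lemma EX1mX_add_swap_le_1: "EX1mX \<theta> \<beta> l i j + EX1mX \<theta> \<beta> l j i \<le> 1"
proof -
  have "0 \<le> resp_prob a b" "resp_prob a b \<le> 1" for a b
    using resp_prob_pos resp_prob_less_1 less_imp_le by blast+
  hence "EX1mX \<theta> \<beta> l i j \<le> resp_prob (\<theta> l) (\<beta> i)"
    "EX1mX \<theta> \<beta> l j i \<le> 1 - resp_prob (\<theta> l) (\<beta> i)"
    unfolding EX1mX_def by (simp_all add: mult_left_le mult_left_le_one_le)
  thus ?thesis by simp
qed

lemma finite_EX1mX_values:
  "finite {EX1mX \<theta> \<beta> l i j | l i j. l < n \<and> i < m \<and> j < m \<and> i \<noteq> j}"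
proof (rule finite_subset)
  show "{EX1mX \<theta> \<beta> l i j | l i j. l < n \<and> i < m \<and> j < m \<and> i \<noteq> j}
      \<subseteq> (\<lambda>(l,i,j). EX1mX \<theta> \<beta> l i j) ` ({..<n} \<times> {..<m} \<times> {..<m})"
  proof
    fix x assume "x \<in> {EX1mX \<theta> \<beta> l i j | l i j. l < n \<and> i < m \<and> j < m \<and> i \<noteq> j}"
    then obtain l i j where "x = EX1mX \<theta> \<beta> l i j" "l < n" "i < m" "j < m" by blast
    thus "x \<in> (\<lambda>(l,i,j). EX1mX \<theta> \<beta> l i j) ` ({..<n} \<times> {..<m} \<times> {..<m})"
      by (intro image_eqI[of _ _ "(l,i,j)"]) auto
  qed
qed auto

lemma gamma_min_le_EX1mX:
  assumes "l < n" "i < m" "j < m" "i \<noteq> j"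
  shows "gamma_min n m \<theta> \<beta> \<le> EX1mX \<theta> \<beta> l i j"
  unfolding gamma_min_def using assms by (intro Min_le finite_EX1mX_values) auto

lemma gamma_min_pos:
  assumes "n \<ge> 1" "m \<ge> 2"
  shows "0 < gamma_min n m \<theta> \<beta>"
proof -
  have "gamma_min n m \<theta> \<beta> \<in> {EX1mX \<theta> \<beta> l i j | l i j. l < n \<and> i < m \<and> j < m \<and> i \<noteq> j}"
  proof (unfold gamma_min_def, intro Min_in finite_EX1mX_values)
    have "0 < n" "1 < m" "(0::nat) \<noteq> 1" using assms by auto
    thus "{EX1mX \<theta> \<beta> l i j | l i j. l < n \<and> i < m \<and> j < m \<and> i \<noteq> j} \<noteq> {}" by fastforce
  qed
  thus ?thesis using EX1mX_pos by auto
qed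

lemma EX1mX_le_1_minus_gamma_min:
  assumes "l < n" "i < m" "j < m" "i \<noteq> j"
  shows "EX1mX \<theta> \<beta> l i j \<le> 1 - gamma_min n m \<theta> \<beta>"
  using EX1mX_add_swap_le_1[of \<theta> \<beta> l i j] gamma_min_le_EX1mX[of l n j m i \<theta> \<beta>] assms by simp

lemma gamma_min_less_1:
  assumes "n \<ge> 1" "m \<ge> 2"
  shows "gamma_min n m \<theta> \<beta> < 1"
  using EX1mX_le_1_minus_gamma_min[of 0 n 0 m 1 \<theta> \<beta>] EX1mX_pos[of \<theta> \<beta> 0 0 1] assms by simp

lemma kappa_nonneg:
  assumes "m > 0"
  shows "0 \<le> kappa m \<beta>"
proof -
  have "Min (\<beta> ` {..<m}) \<le> \<beta> 0" "\<beta> 0 \<le> Max (\<beta> ` {..<m})"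
    using assms by (simp_all add: Min_le Max_ge)
  thus ?thesis unfolding kappa_def by simp
qed

lemma Pstar_carrier: "Pstar n m p A \<theta> \<beta> \<in> carrier_mat m m"
  by (simp add: Pstar_def)

lemma Pstar_row_sum:
  assumes "i < m"
  shows "(\<Sum>k<m. Pstar n m p A \<theta> \<beta> $$ (i,k)) = 1"
proof -
  have "(\<Sum>k\<in>{..<m} - {i}. Pstar n m p A \<theta> \<beta> $$ (i,k))
      = (\<Sum>k\<in>{..<m} - {i}. Poff n m p A \<theta> \<beta> i k)"
    using assms by (intro sum.cong refl) (auto simp: Pstar_def)
  thus ?thesis
    using assms sum.remove[of "{..<m}" i "\<lambda>k. Pstar n m p A \<theta> \<beta> $$ (i,k)"] by (simp add: Pstar_def)
qed

lemma Pstar_reversible: "reversible_wrt (Pstar n m p A \<theta> \<beta>) (\<lambda>i. exp (\<beta> i))"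
  unfolding reversible_wrt_def Pstar_def Poff_def
  by (auto simp: sum_distrib_left EX1mX_detailed_balance mult_ac)

context
  fixes n m :: nat and p :: real and \<theta> \<beta> :: "nat \<Rightarrow> real" and A :: "nat \<Rightarrow> nat \<Rightarrow> real"
  assumes n: "n \<ge> 1" and m: "m \<ge> 2" and p: "0 < p"
    and A01: "\<forall>l<n. \<forall>i<m. A l i \<in> {0, 1}" and event: "event_A n m p A"
begin

private lemma A_mult_nonneg:
  assumes "l < n" "i < m" "j < m"
  shows "0 \<le> A l i * A l j"
proof -
  have "A l i \<in> {0, 1}" "A l j \<in> {0, 1}" using A01 assms by auto
  thus ?thesis by auto
qed

private lemma dconst_pos: "0 < dconst n m p"
  using n m p by (simp add: dconst_def)

private lemma Poff_eq:
  "Poff n m p A \<theta> \<beta> i j = (\<Sum>l<n. A l i * A l j * EX1mX \<theta> \<beta> l i j) / dconst n m p"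
  by (simp add: Poff_def)

lemma Poff_ge:
  assumes ij: "i < m" "j < m" "i \<noteq> j"
  shows "gamma_min n m \<theta> \<beta> / (3 * m) \<le> Poff n m p A \<theta> \<beta> i j"
proof -
  let ?\<gamma> = "gamma_min n m \<theta> \<beta>"
  have "?\<gamma> * (1/2 * n * p\<^sup>2) \<le> ?\<gamma> * Bmat n A i j"
    using event ij gamma_min_pos[OF n m, of \<theta> \<beta>] unfolding event_A_def
    by (intro mult_left_mono) auto
  also have "\<dots> = (\<Sum>l<n. A l i * A l j * ?\<gamma>)"
    unfolding Bmat_def by (simp add: sum_distrib_left mult_ac)
  also have "\<dots> \<le> (\<Sum>l<n. A l i * A l j * EX1mX \<theta> \<beta> l i j)"
    using ij by (intro sum_mono mult_left_mono gamma_min_le_EX1mX A_mult_nonneg) auto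
  finally have "?\<gamma> * (1/2 * n * p\<^sup>2) / dconst n m p \<le> Poff n m p A \<theta> \<beta> i j"
    unfolding Poff_eq by (rule divide_right_mono) (use dconst_pos in simp)
  moreover have "?\<gamma> * (1/2 * n * p\<^sup>2) / dconst n m p = ?\<gamma> / (3 * m)"
    using n m p by (simp add: dconst_def field_simps power2_eq_square)
  ultimately show ?thesis by simp
qed

lemma Poff_le:
  assumes ij: "i < m" "j < m" "i \<noteq> j"
  shows "Poff n m p A \<theta> \<beta> i j \<le> (1 - gamma_min n m \<theta> \<beta>) / m"
proof -
  let ?\<gamma> = "gamma_min n m \<theta> \<beta>"
  have "(\<Sum>l<n. A l i * A l j * EX1mX \<theta> \<beta> l i j) \<le> (\<Sum>l<n. A l i * A l j * (1 - ?\<gamma>))"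
    using ij by (intro sum_mono mult_left_mono EX1mX_le_1_minus_gamma_min A_mult_nonneg) auto
  also have "\<dots> = (1 - ?\<gamma>) * Bmat n A i j"
    unfolding Bmat_def by (simp add: sum_distrib_left mult_ac)
  also have "\<dots> \<le> (1 - ?\<gamma>) * (3/2 * n * p\<^sup>2)"
    using event ij gamma_min_less_1[OF n m, of \<theta> \<beta>] unfolding event_A_def
    by (intro mult_left_mono) auto
  finally have "Poff n m p A \<theta> \<beta> i j \<le> (1 - ?\<gamma>) * (3/2 * n * p\<^sup>2) / dconst n m p"
    unfolding Poff_eq by (rule divide_right_mono) (use dconst_pos in simp)
  also have "\<dots> = (1 - ?\<gamma>) / m"
    using n m p by (simp add: dconst_def field_simps power2_eq_square)
  finally show ?thesis .
qed

lemma Pstar_diag_ge: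
  assumes i: "i < m"
  shows "gamma_min n m \<theta> \<beta> \<le> Pstar n m p A \<theta> \<beta> $$ (i,i)"
proof -
  let ?\<gamma> = "gamma_min n m \<theta> \<beta>"
  have "(\<Sum>k\<in>{..<m} - {i}. Poff n m p A \<theta> \<beta> i k) \<le> (m - 1) * ((1 - ?\<gamma>) / m)"
    using sum_bounded_above[of "{..<m} - {i}" "Poff n m p A \<theta> \<beta> i" "(1 - ?\<gamma>) / m"] Poff_le i
    by (simp add: of_nat_diff)
  also have "\<dots> \<le> 1 - ?\<gamma>"
    using gamma_min_less_1[OF n m, of \<theta> \<beta>] m by (simp add: field_simps)
  finally show ?thesis using i by (simp add: Pstar_def)
qed

end

theorem mainTheorem9:
  fixes n m :: nat and p :: real
    and \<theta> \<beta> :: "nat \<Rightarrow> real"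
    and A :: "nat \<Rightarrow> nat \<Rightarrow> real"
  assumes "n \<ge> 1" and "m \<ge> 2"
    and "0 < p" and "p \<le> 1"
    and "\<forall>l<n. \<forall>i<m. A l i \<in> {0, 1}"
    and "event_A n m p A"
  shows "spectral_gap (Pstar n m p A \<theta> \<beta>)
           \<ge> gamma_min n m \<theta> \<beta> / (3 * exp (2 * kappa m \<beta>))"
proof -
  let ?\<gamma> = "gamma_min n m \<theta> \<beta>"
  have "?\<gamma> / 3 \<le> spectral_gap (Pstar n m p A \<theta> \<beta>)"
  proof (rule spectral_gap_ge_if_off_diag_ge
      [OF Pstar_carrier \<open>m \<ge> 2\<close> _ Pstar_reversible Pstar_row_sum])
    show "0 < ?\<gamma> / 3" using gamma_min_pos[OF assms(1,2)] by simp
    show "?\<gamma> / 3 / m \<le> Pstar n m p A \<theta> \<beta> $$ (i,j)" if "i < m" "j < m" "i \<noteq> j" for i j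
      using Poff_ge[OF assms(1-3,5,6) that, of \<theta> \<beta>] that by (simp add: Pstar_def)
    show "?\<gamma> / 3 / 2 \<le> Pstar n m p A \<theta> \<beta> $$ (i,i)" if "i < m" for i
      using Pstar_diag_ge[OF assms(1-3,5,6) that, of \<theta> \<beta>] gamma_min_pos[OF assms(1,2), of \<theta> \<beta>]
      by simp
  qed
  moreover have "?\<gamma> / (3 * exp (2 * kappa m \<beta>)) \<le> ?\<gamma> / 3"
    using gamma_min_pos[OF assms(1,2), of \<theta> \<beta>] kappa_nonneg[of m \<beta>] assms(2)
    by (intro divide_left_mono) auto
  ultimately show ?thesis by linarith
qed

end
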